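(* In the setting of the context, for every $n\in\mathbb Z$, $$\psi_n=\int_0^{2\pi}\phi(\theta)A_n(\theta)\frac{d\theta}{2\pi},\qquad\psi^*_n=\int_0^{2\pi}\phi^*(\theta)A^*_n(\theta)\frac{d\theta}{2\pi},$$ where $$A_n(\theta)=\frac{e^{-in\theta}}{C_n\prod_{j\le n-1}(1+S_je^{-i\theta})\prod_{j\ge n+1}(1-S_je^{i\theta})}\Big\{\frac{1}{1+S_ne^{-i\theta}}+\frac{1}{1-S_ne^{i\theta}}-1\Big\},$$ $$A^*_n(\theta)=\frac{e^{in\theta}}{C_n\prod_{j\le n-1}(1-S_je^{i\theta})\prod_{j\ge n+1}(1+S_je^{-i\theta})}\Big\{\frac{1}{1+S_ne^{-i\theta}}+\frac{1}{1-S_ne^{i\theta}}-1\Big\}.$$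
   Context: Let $\psi_n,\psi^*_n$ ($n\in\mathbb Z$) be operators (formal symbols), let $\gamma_n\ge0$ with only finitely many nonzero, $S_n=\sinh\gamma_n<1$, $C_n=\cosh\gamma_n$, and define the formal linear combinations $\phi(\theta)=\sum_nC_ne^{in\theta}\prod_{j\le n-1}(1+S_je^{-i\theta})\prod_{j\ge n+1}(1-S_je^{i\theta})\psi_n$ and $\phi^*(\theta)=\sum_nC_ne^{-in\theta}\prod_{j\le n-1}(1-S_je^{i\theta})\prod_{j\ge n+1}(1+S_je^{-i\theta})\psi^*_n$. The integrals are taken coefficientwise in the $\psi_k$ (resp. $\psi^*_k$). *)

theory Defs
  imports "HOL-Analysis.Analysis"
begin

text \<open>Since only finitely many gamma_j are nonzero, the infinite products over j <= n-1
  and j >= n+1 reduce to finite products over the support of gamma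
  (factors with gamma_j = 0 are equal to 1).\<close>

definition S :: "(int \<Rightarrow> real) \<Rightarrow> int \<Rightarrow> real" where
  "S \<gamma> j = sinh (\<gamma> j)"

definition C :: "(int \<Rightarrow> real) \<Rightarrow> int \<Rightarrow> real" where
  "C \<gamma> j = cosh (\<gamma> j)"

definition Lprod :: "(int \<Rightarrow> real) \<Rightarrow> int \<Rightarrow> real \<Rightarrow> complex" where
  "Lprod \<gamma> n \<theta> = (\<Prod>j\<in>{j. j < n \<and> \<gamma> j \<noteq> 0}. 1 + of_real (S \<gamma> j) * exp (- \<i> * of_real \<theta>))"

definition Rprod :: "(int \<Rightarrow> real) \<Rightarrow> int \<Rightarrow> real \<Rightarrow> complex" where
  "Rprod \<gamma> n \<theta> = (\<Prod>j\<in>{j. n < j \<and> \<gamma> j \<noteq> 0}. 1 - of_real (S \<gamma> j) * exp (\<i> * of_real \<theta>))"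

definition Lprod_star :: "(int \<Rightarrow> real) \<Rightarrow> int \<Rightarrow> real \<Rightarrow> complex" where
  "Lprod_star \<gamma> n \<theta> = (\<Prod>j\<in>{j. j < n \<and> \<gamma> j \<noteq> 0}. 1 - of_real (S \<gamma> j) * exp (\<i> * of_real \<theta>))"

definition Rprod_star :: "(int \<Rightarrow> real) \<Rightarrow> int \<Rightarrow> real \<Rightarrow> complex" where
  "Rprod_star \<gamma> n \<theta> = (\<Prod>j\<in>{j. n < j \<and> \<gamma> j \<noteq> 0}. 1 + of_real (S \<gamma> j) * exp (- \<i> * of_real \<theta>))"

text \<open>Coefficient of psi_n in phi(theta), and of psi*_n in phi*(theta).\<close>
definition phi_coeff :: "(int \<Rightarrow> real) \<Rightarrow> int \<Rightarrow> real \<Rightarrow> complex" where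
  "phi_coeff \<gamma> n \<theta> = of_real (C \<gamma> n) * exp (\<i> * of_int n * of_real \<theta>) * Lprod \<gamma> n \<theta> * Rprod \<gamma> n \<theta>"

definition phi_star_coeff :: "(int \<Rightarrow> real) \<Rightarrow> int \<Rightarrow> real \<Rightarrow> complex" where
  "phi_star_coeff \<gamma> n \<theta> = of_real (C \<gamma> n) * exp (- \<i> * of_int n * of_real \<theta>) * Lprod_star \<gamma> n \<theta> * Rprod_star \<gamma> n \<theta>"

definition Bracket :: "(int \<Rightarrow> real) \<Rightarrow> int \<Rightarrow> real \<Rightarrow> complex" where
  "Bracket \<gamma> n \<theta> = 1 / (1 + of_real (S \<gamma> n) * exp (- \<i> * of_real \<theta>))
                    + 1 / (1 - of_real (S \<gamma> n) * exp (\<i> * of_real \<theta>)) - 1"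

definition A :: "(int \<Rightarrow> real) \<Rightarrow> int \<Rightarrow> real \<Rightarrow> complex" where
  "A \<gamma> n \<theta> = exp (- \<i> * of_int n * of_real \<theta>)
      / (of_real (C \<gamma> n) * Lprod \<gamma> n \<theta> * Rprod \<gamma> n \<theta>) * Bracket \<gamma> n \<theta>"

definition A_star :: "(int \<Rightarrow> real) \<Rightarrow> int \<Rightarrow> real \<Rightarrow> complex" where
  "A_star \<gamma> n \<theta> = exp (\<i> * of_int n * of_real \<theta>)
      / (of_real (C \<gamma> n) * Lprod_star \<gamma> n \<theta> * Rprod_star \<gamma> n \<theta>) * Bracket \<gamma> n \<theta>"

end

theory Submission
  imports Defs "HOL-Complex_Analysis.Complex_Analysis"
begin

text \<open>
  Put z = e^{i theta}. On the unit circle phi_k A_n is the rational function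
  (C_k/C_n) z^{k-n} (L_k/L_n) (R_k/R_n) B_n(z), with L, R the two products and B_n the bracket.
  For k = n it is B_n, and each of the three terms of B_n has mean 1 over the circle.
  For k > n the quotients telescope to a function holomorphic on the closed unit disc and
  vanishing at 0, so its mean is 0 by Cauchy's integral formula; k < n is the mirror image
  under z -> 1/z, j -> -j. The starred identities are the unstarred ones for the reversed
  sequence j -> gamma_(-j).
\<close>

lemma has_integral_cis_holomorphic:
  fixes h :: "complex \<Rightarrow> complex"
  assumes "continuous_on (cball 0 1) h" "h holomorphic_on ball 0 1"
  shows "((\<lambda>t. h (cis t)) has_integral 2 * of_real pi * h 0) {0..2*pi}"
proof -
  have "((\<lambda>u. h u / (u - 0)) has_contour_integral 2 * of_real pi * \<i> * h 0) (circlepath 0 1)"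
    by (rule Cauchy_integral_circlepath[OF assms]) simp
  then have "((\<lambda>t. h (0 + 1 * cis t) / (0 + 1 * cis t - 0) * 1 * \<i> * cis t)
               has_integral 2 * of_real pi * \<i> * h 0) {0..2*pi}"
    unfolding circlepath_def using has_contour_integral_part_circlepath_iff[of 0 "2*pi"] by simp
  then have "((\<lambda>t. \<i> * h (cis t)) has_integral 2 * of_real pi * \<i> * h 0) {0..2*pi}"
    by (rule has_integral_eq[rotated]) (simp add: cis_neq_zero)
  then have "((\<lambda>t. h (cis t)) has_integral 2 * of_real pi * \<i> * h 0 / \<i>) {0..2*pi}"
    using has_integral_mult_right_iff[of \<i> "\<lambda>t. h (cis t)"] by simp
  moreover have "2 * of_real pi * \<i> * h 0 / \<i> = 2 * of_real pi * h 0"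
    by simp
  ultimately show ?thesis
    by (simp only:)
qed

lemma has_integral_reflect_ivl_real:
  fixes f :: "real \<Rightarrow> 'a::real_normed_vector"
  assumes "(f has_integral I) {a..b}"
  shows "((\<lambda>t. f (a + b - t)) has_integral I) {a..b}"
proof -
  have "((\<lambda>x. f (- x)) has_integral I) {-b..-a}"
    using assms by simp
  then have "((\<lambda>x. f (- (x + - (a + b)))) has_integral I) {-b - - (a + b)..-a - - (a + b)}"
    by (rule has_integral_shift_real_ivl)
  then show ?thesis
    by (simp add: algebra_simps)
qed

lemma has_integral_cis_inverse:
  assumes "((\<lambda>t. F (cis t)) has_integral I) {0..2*pi}"
  shows "((\<lambda>t. F (inverse (cis t))) has_integral I) {0..2*pi}"
proof -
  have "cis (0 + 2 * pi - t) = inverse (cis t)" for t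
    using cis_mult[of "2 * pi" "- t"] by simp
  then show ?thesis
    using has_integral_reflect_ivl_real[OF assms] by simp
qed

lemma finite_Collect_uminus:
  fixes P :: "'a::group_add \<Rightarrow> bool"
  assumes "finite {j. P j}"
  shows "finite {j. P (- j)}"
proof -
  have "{j. P (- j)} = uminus -` {j. P j}"
    by auto
  then show ?thesis
    using finite_vimageI[OF assms inj_uminus] by simp
qed

lemma one_minus_of_real_mult_nonzero:
  fixes z :: complex
  assumes "\<bar>a\<bar> < 1" "norm z \<le> 1"
  shows "1 - of_real a * z \<noteq> 0"
proof -
  have "norm (of_real a * z) \<le> \<bar>a\<bar>"
    using assms mult_left_le[of "norm z" "\<bar>a\<bar>"] by (simp add: norm_mult)
  then have "norm (of_real a * z) < 1"
    using assms(1) by linarith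
  then show ?thesis
    by auto
qed

lemma one_plus_of_real_div_nonzero:
  fixes z :: complex
  assumes "\<bar>a\<bar> < 1" "norm z = 1"
  shows "1 + of_real a / z \<noteq> 0"
  using one_minus_of_real_mult_nonzero[of "- a" "inverse z"] assms
  by (simp add: divide_inverse norm_inverse)

definition Lprod_z :: "(int \<Rightarrow> real) \<Rightarrow> int \<Rightarrow> complex \<Rightarrow> complex" where
  "Lprod_z s n z = (\<Prod>j\<in>{j. j < n \<and> s j \<noteq> 0}. 1 + of_real (s j) / z)"

definition Rprod_z :: "(int \<Rightarrow> real) \<Rightarrow> int \<Rightarrow> complex \<Rightarrow> complex" where
  "Rprod_z s n z = (\<Prod>j\<in>{j. n < j \<and> s j \<noteq> 0}. 1 - of_real (s j) * z)"

definition Bracket_z :: "real \<Rightarrow> complex \<Rightarrow> complex" where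
  "Bracket_z a z = 1 / (1 + of_real a / z) + 1 / (1 - of_real a * z) - 1"

definition phi_z :: "(int \<Rightarrow> real) \<Rightarrow> (int \<Rightarrow> real) \<Rightarrow> int \<Rightarrow> complex \<Rightarrow> complex" where
  "phi_z s c k z = of_real (c k) * z powi k * Lprod_z s k z * Rprod_z s k z"

definition A_z :: "(int \<Rightarrow> real) \<Rightarrow> (int \<Rightarrow> real) \<Rightarrow> int \<Rightarrow> complex \<Rightarrow> complex" where
  "A_z s c n z = z powi (- n) / (of_real (c n) * Lprod_z s n z * Rprod_z s n z) * Bracket_z (s n) z"

lemma Lprod_z_reflect: "Lprod_z (\<lambda>j. - s (- j)) (- n) (inverse z) = Rprod_z s n z"
  unfolding Lprod_z_def Rprod_z_def
  by (rule prod.reindex_bij_witness[of _ uminus uminus]) (auto simp: divide_inverse)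

lemma Rprod_z_reflect: "Rprod_z (\<lambda>j. - s (- j)) (- n) (inverse z) = Lprod_z s n z"
  unfolding Lprod_z_def Rprod_z_def
  by (rule prod.reindex_bij_witness[of _ uminus uminus]) (auto simp: divide_inverse)

lemma Bracket_z_reflect: "Bracket_z (- a) (inverse z) = Bracket_z a z"
  unfolding Bracket_z_def by (simp add: divide_inverse)

lemma phi_z_reflect: "phi_z (\<lambda>j. - s (- j)) (\<lambda>j. c (- j)) (- k) (inverse z) = phi_z s c k z"
  unfolding phi_z_def Lprod_z_reflect Rprod_z_reflect
  by (simp add: power_int_inverse power_int_minus mult_ac)

lemma A_z_reflect: "A_z (\<lambda>j. - s (- j)) (\<lambda>j. c (- j)) (- n) (inverse z) = A_z s c n z"
  unfolding A_z_def Lprod_z_reflect Rprod_z_reflect Bracket_z_reflect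
  by (simp add: power_int_inverse power_int_minus mult_ac)

lemma Bracket_z_times:
  fixes z :: complex
  assumes "z \<noteq> 0" "1 + of_real a / z \<noteq> 0" "1 - of_real a * z \<noteq> 0"
  shows "(z + of_real a) * Bracket_z a z = z * of_real (1 + a\<^sup>2) / (1 - of_real a * z)"
proof -
  have "z + of_real a \<noteq> 0"
    using assms(1,2) by (simp add: field_simps)
  then have first_term: "(z + of_real a) * (1 / (1 + of_real a / z)) = z"
    using assms(1) by (simp add: field_simps)
  have "(z + of_real a) * Bracket_z a z
          = z + (z + of_real a) / (1 - of_real a * z) - (z + of_real a)"
    unfolding Bracket_z_def right_diff_distrib distrib_left first_term by simp
  also have "\<dots> = z * of_real (1 + a\<^sup>2) / (1 - of_real a * z)"
    using assms(3) by (simp add: field_simps power2_eq_square)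
  finally show ?thesis .
qed

lemma has_integral_Bracket_z:
  assumes "\<bar>a\<bar> < 1"
  shows "((\<lambda>t. Bracket_z a (cis t)) has_integral 2 * of_real pi) {0..2*pi}"
proof -
  define h1 where "h1 w = 1 / (1 + of_real a * w)" for w :: complex
  define h2 where "h2 w = 1 / (1 - of_real a * w)" for w :: complex
  have h1_nonzero: "1 + of_real a * w \<noteq> 0" if "norm w \<le> 1" for w :: complex
    using one_minus_of_real_mult_nonzero[of "- a" w] assms that by simp
  have h2_nonzero: "1 - of_real a * w \<noteq> 0" if "norm w \<le> 1" for w :: complex
    using one_minus_of_real_mult_nonzero[OF assms that] .
  have "continuous_on (cball 0 1) h1" "h1 holomorphic_on ball 0 1"
    unfolding h1_def using h1_nonzero by (auto intro!: continuous_intros holomorphic_intros)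
  then have "((\<lambda>t. h1 (cis t)) has_integral 2 * of_real pi * h1 0) {0..2*pi}"
    by (rule has_integral_cis_holomorphic)
  then have "((\<lambda>t. h1 (inverse (cis t))) has_integral 2 * of_real pi * h1 0) {0..2*pi}"
    by (rule has_integral_cis_inverse)
  then have I1: "((\<lambda>t. h1 (inverse (cis t))) has_integral 2 * of_real pi) {0..2*pi}"
    by (simp add: h1_def)
  have "continuous_on (cball 0 1) h2" "h2 holomorphic_on ball 0 1"
    unfolding h2_def using h2_nonzero by (auto intro!: continuous_intros holomorphic_intros)
  then have "((\<lambda>t. h2 (cis t)) has_integral 2 * of_real pi * h2 0) {0..2*pi}"
    by (rule has_integral_cis_holomorphic)
  then have I2: "((\<lambda>t. h2 (cis t)) has_integral 2 * of_real pi) {0..2*pi}"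
    by (simp add: h2_def)
  have I3: "((\<lambda>t. 1::complex) has_integral 2 * of_real pi) {0..2*pi}"
    using has_integral_const_real[of "1::complex" 0 "2*pi"] by (simp add: scaleR_conv_of_real)
  have "((\<lambda>t. h1 (inverse (cis t)) + h2 (cis t) - 1) has_integral 2 * of_real pi) {0..2*pi}"
    using has_integral_diff[OF has_integral_add[OF I1 I2] I3] by simp
  then show ?thesis
    by (rule has_integral_eq[rotated]) (simp add: h1_def h2_def Bracket_z_def divide_inverse)
qed

locale circle_weights =
  fixes s c :: "int \<Rightarrow> real"
  assumes abs_s_less_1: "\<And>j. \<bar>s j\<bar> < 1"
    and finite_support: "finite {j. s j \<noteq> 0}"
    and c_nonzero: "\<And>j. c j \<noteq> 0"
begin

lemma reflected: "circle_weights (\<lambda>j. - s (- j)) (\<lambda>j. c (- j))"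
  using abs_s_less_1 c_nonzero finite_Collect_uminus[OF finite_support]
  by unfold_locales auto

lemma finite_support_below: "finite {j. j < n \<and> s j \<noteq> 0}"
  by (rule finite_subset[OF _ finite_support]) auto

lemma finite_support_above: "finite {j. n < j \<and> s j \<noteq> 0}"
  by (rule finite_subset[OF _ finite_support]) auto

lemma Lprod_z_nonzero: "norm z = 1 \<Longrightarrow> Lprod_z s n z \<noteq> 0"
  unfolding Lprod_z_def
  using finite_support_below one_plus_of_real_div_nonzero[OF abs_s_less_1]
  by (simp add: prod_zero_iff)

lemma Rprod_z_nonzero: "norm z \<le> 1 \<Longrightarrow> Rprod_z s n z \<noteq> 0"
  unfolding Rprod_z_def
  using finite_support_above one_minus_of_real_mult_nonzero[OF abs_s_less_1]
  by (simp add: prod_zero_iff)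

lemma Lprod_z_split:
  assumes "n \<le> k"
  shows "Lprod_z s k z = Lprod_z s n z * (\<Prod>j\<in>{n..<k}. 1 + of_real (s j) / z)"
proof -
  have support: "{j. j < k \<and> s j \<noteq> 0} = {j. j < n \<and> s j \<noteq> 0} \<union> {j\<in>{n..<k}. s j \<noteq> 0}"
    using assms by auto
  have "Lprod_z s k z = Lprod_z s n z * (\<Prod>j\<in>{j\<in>{n..<k}. s j \<noteq> 0}. 1 + of_real (s j) / z)"
    unfolding Lprod_z_def support by (rule prod.union_disjoint) (use finite_support_below in auto)
  also have "(\<Prod>j\<in>{j\<in>{n..<k}. s j \<noteq> 0}. 1 + of_real (s j) / z) = (\<Prod>j\<in>{n..<k}. 1 + of_real (s j) / z)"
    by (rule prod.mono_neutral_left) auto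
  finally show ?thesis .
qed

lemma Rprod_z_split:
  assumes "n \<le> k"
  shows "Rprod_z s n z = Rprod_z s k z * (\<Prod>j\<in>{n<..k}. 1 - of_real (s j) * z)"
proof -
  have support: "{j. n < j \<and> s j \<noteq> 0} = {j. k < j \<and> s j \<noteq> 0} \<union> {j\<in>{n<..k}. s j \<noteq> 0}"
    using assms by auto
  have "Rprod_z s n z = Rprod_z s k z * (\<Prod>j\<in>{j\<in>{n<..k}. s j \<noteq> 0}. 1 - of_real (s j) * z)"
    unfolding Rprod_z_def support
    by (rule prod.union_disjoint) (auto intro: finite_support_above finite_subset[of _ "{n<..k}"])
  also have "(\<Prod>j\<in>{j\<in>{n<..k}. s j \<noteq> 0}. 1 - of_real (s j) * z) = (\<Prod>j\<in>{n<..k}. 1 - of_real (s j) * z)"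
    by (rule prod.mono_neutral_left) auto
  finally show ?thesis .
qed

lemma phi_z_A_z_diagonal:
  assumes "norm z = 1"
  shows "phi_z s c n z * A_z s c n z = Bracket_z (s n) z"
proof -
  have "z \<noteq> 0"
    using assms by auto
  then have "z powi n * z powi (- n) = 1"
    by (simp add: power_int_minus)
  then show ?thesis
    unfolding phi_z_def A_z_def
    using Lprod_z_nonzero[OF assms, of n] Rprod_z_nonzero[of z n] assms c_nonzero[of n]
    by (simp add: field_simps)
qed

lemma phi_z_A_z_above_diagonal:
  assumes "norm z = 1" "n < k"
  shows "phi_z s c k z * A_z s c n z =
           of_real (c k / c n) * (z * of_real (1 + (s n)\<^sup>2) / (1 - of_real (s n) * z))
           * (\<Prod>j\<in>{n<..<k}. z + of_real (s j)) / (\<Prod>j\<in>{n<..k}. 1 - of_real (s j) * z)"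
proof -
  let ?P = "\<Prod>j\<in>{n..<k}. 1 + of_real (s j) / z"
  let ?Q = "\<Prod>j\<in>{n<..k}. 1 - of_real (s j) * z"
  have z: "z \<noteq> 0"
    using assms(1) by auto
  have split: "phi_z s c k z * A_z s c n z
                = of_real (c k / c n) * (z powi k * z powi (- n) * ?P) * Bracket_z (s n) z / ?Q"
    unfolding phi_z_def A_z_def Lprod_z_split[OF less_imp_le[OF assms(2)]]
      Rprod_z_split[OF less_imp_le[OF assms(2)]]
    using Lprod_z_nonzero[OF assms(1), of n] Rprod_z_nonzero[of z k] assms(1) c_nonzero[of n]
    by (simp add: field_simps)
  have "z powi k * z powi (- n) = z powi (k - n)"
    using z by (simp add: power_int_diff power_int_minus divide_inverse)
  also have "\<dots> = z powi int (card {n..<k})"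
    using assms(2) by simp
  finally have power: "z powi k * z powi (- n) = z ^ card {n..<k}"
    by (simp only: power_int_of_nat)
  have "z powi k * z powi (- n) * ?P = (\<Prod>j\<in>{n..<k}. z * (1 + of_real (s j) / z))"
    unfolding power by (simp add: prod.distrib)
  also have "\<dots> = (\<Prod>j\<in>{n..<k}. z + of_real (s j))"
    using z by (intro prod.cong) (simp_all add: distrib_left)
  also have "\<dots> = (z + of_real (s n)) * (\<Prod>j\<in>{n<..<k}. z + of_real (s j))"
  proof -
    have "{n..<k} = insert n {n<..<k}"
      using assms(2) by auto
    then show ?thesis
      by simp
  qed
  finally have telescope: "z powi k * z powi (- n) * ?P = \<dots>" .
  have bracket: "(z + of_real (s n)) * Bracket_z (s n) z
                  = z * of_real (1 + (s n)\<^sup>2) / (1 - of_real (s n) * z)"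
    using assms(1) z by (intro Bracket_z_times one_plus_of_real_div_nonzero
        one_minus_of_real_mult_nonzero abs_s_less_1) auto
  show ?thesis
    unfolding split telescope bracket[symmetric] by (simp add: mult_ac)
qed

lemma has_integral_phi_z_A_z_above_diagonal:
  assumes "n < k"
  shows "((\<lambda>t. phi_z s c k (cis t) * A_z s c n (cis t)) has_integral 0) {0..2*pi}"
proof -
  define h where "h z = of_real (c k / c n) * (z * of_real (1 + (s n)\<^sup>2) / (1 - of_real (s n) * z))
           * (\<Prod>j\<in>{n<..<k}. z + of_real (s j)) / (\<Prod>j\<in>{n<..k}. 1 - of_real (s j) * z)" for z :: complex
  have nonzero: "1 - of_real (s j) * z \<noteq> 0" if "norm z \<le> 1" for j and z :: complex
    using one_minus_of_real_mult_nonzero[OF abs_s_less_1 that] .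
  have "continuous_on (cball 0 1) h" "h holomorphic_on ball 0 1"
    unfolding h_def using nonzero c_nonzero
    by (auto simp: prod_zero_iff intro!: continuous_intros holomorphic_intros)
  then have "((\<lambda>t. h (cis t)) has_integral 2 * of_real pi * h 0) {0..2*pi}"
    by (rule has_integral_cis_holomorphic)
  moreover have "h 0 = 0"
    by (simp add: h_def)
  ultimately have "((\<lambda>t. h (cis t)) has_integral 0) {0..2*pi}"
    by simp
  then show ?thesis
    by (rule has_integral_eq[rotated]) (simp add: h_def phi_z_A_z_above_diagonal[OF _ assms])
qed

lemma has_integral_phi_z_A_z:
  "((\<lambda>t. phi_z s c k (cis t) * A_z s c n (cis t)) has_integral (if k = n then 2 * of_real pi else 0))
     {0..2*pi}"
proof (cases k n rule: linorder_cases)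
  case less
  interpret reflected: circle_weights "\<lambda>j. - s (- j)" "\<lambda>j. c (- j)"
    by (rule reflected)
  have "- n < - k"
    using less by simp
  then have "((\<lambda>t. phi_z (\<lambda>j. - s (- j)) (\<lambda>j. c (- j)) (- k) (inverse (cis t))
                 * A_z (\<lambda>j. - s (- j)) (\<lambda>j. c (- j)) (- n) (inverse (cis t))) has_integral 0) {0..2*pi}"
    by (rule has_integral_cis_inverse[OF reflected.has_integral_phi_z_A_z_above_diagonal])
  then show ?thesis
    using less by (simp only: phi_z_reflect A_z_reflect) simp
next
  case equal
  then show ?thesis
    using has_integral_Bracket_z[OF abs_s_less_1]
    by (simp add: phi_z_A_z_diagonal)
next
  case greater
  then show ?thesis
    using has_integral_phi_z_A_z_above_diagonal by simp
qed

end

lemma exp_i_mult_eq_cis: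
  "exp (\<i> * of_real \<theta>) = cis \<theta>"
  "exp (- \<i> * of_real \<theta>) = inverse (cis \<theta>)"
  "exp (\<i> * of_int k * of_real \<theta>) = cis \<theta> powi k"
  "exp (- \<i> * of_int k * of_real \<theta>) = cis \<theta> powi (- k)"
  by (simp_all only: cis_power_int) (simp_all add: cis_conv_exp exp_minus mult_ac)

lemma phi_coeff_eq_phi_z: "phi_coeff \<gamma> k \<theta> = phi_z (S \<gamma>) (C \<gamma>) k (cis \<theta>)"
  unfolding phi_coeff_def phi_z_def Lprod_def Lprod_z_def Rprod_def Rprod_z_def exp_i_mult_eq_cis
  by (simp add: S_def divide_inverse)

lemma A_eq_A_z: "A \<gamma> n \<theta> = A_z (S \<gamma>) (C \<gamma>) n (cis \<theta>)"
  unfolding A_def A_z_def Bracket_def Bracket_z_def Lprod_def Lprod_z_def Rprod_def Rprod_z_def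
    exp_i_mult_eq_cis
  by (simp add: S_def divide_inverse)

lemma Lprod_reflect: "Lprod (\<lambda>j. \<gamma> (- j)) (- n) \<theta> = Rprod_star \<gamma> n \<theta>"
  unfolding Lprod_def Rprod_star_def S_def
  by (rule prod.reindex_bij_witness[of _ uminus uminus]) auto

lemma Rprod_reflect: "Rprod (\<lambda>j. \<gamma> (- j)) (- n) \<theta> = Lprod_star \<gamma> n \<theta>"
  unfolding Rprod_def Lprod_star_def S_def
  by (rule prod.reindex_bij_witness[of _ uminus uminus]) auto

lemma phi_star_coeff_eq_phi_coeff_reflect:
  "phi_star_coeff \<gamma> k \<theta> = phi_coeff (\<lambda>j. \<gamma> (- j)) (- k) \<theta>"
  unfolding phi_star_coeff_def phi_coeff_def Lprod_reflect Rprod_reflect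
  by (simp add: C_def mult_ac)

lemma A_star_eq_A_reflect: "A_star \<gamma> n \<theta> = A (\<lambda>j. \<gamma> (- j)) (- n) \<theta>"
  unfolding A_star_def A_def Bracket_def Lprod_reflect Rprod_reflect
  by (simp add: C_def S_def mult_ac)

lemma phi_coeff_A_biorthogonal:
  fixes \<gamma> :: "int \<Rightarrow> real"
  assumes "\<And>j. \<gamma> j \<ge> 0" "finite {j. \<gamma> j \<noteq> 0}" "\<And>j. sinh (\<gamma> j) < 1"
  shows "((\<lambda>\<theta>. phi_coeff \<gamma> k \<theta> * A \<gamma> n \<theta> / (2 * of_real pi)) has_integral (if k = n then 1 else 0))
           {0..2*pi}"
proof -
  interpret circle_weights "S \<gamma>" "C \<gamma>"
    using assms by unfold_locales (auto simp: S_def C_def)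
  show ?thesis
    using has_integral_divide[OF has_integral_phi_z_A_z[of k n], where c = "2 * of_real pi"]
    by (cases "k = n") (simp_all add: phi_coeff_eq_phi_z A_eq_A_z)
qed

theorem propositionF3:
  fixes \<gamma> :: "int \<Rightarrow> real"
  assumes nonneg: "\<And>j. \<gamma> j \<ge> 0"
    and fin: "finite {j. \<gamma> j \<noteq> 0}"
    and small: "\<And>j. sinh (\<gamma> j) < 1"
  shows "\<forall>n k::int.
           ((\<lambda>\<theta>. phi_coeff \<gamma> k \<theta> * A \<gamma> n \<theta> / (2 * of_real pi))
              has_integral (if k = n then 1 else 0)) {0..2*pi}
         \<and> ((\<lambda>\<theta>. phi_star_coeff \<gamma> k \<theta> * A_star \<gamma> n \<theta> / (2 * of_real pi))
              has_integral (if k = n then 1 else 0)) {0..2*pi}"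
proof (intro allI conjI)
  fix n k :: int
  show "((\<lambda>\<theta>. phi_coeff \<gamma> k \<theta> * A \<gamma> n \<theta> / (2 * of_real pi))
          has_integral (if k = n then 1 else 0)) {0..2*pi}"
    using phi_coeff_A_biorthogonal[OF assms] .
  have "((\<lambda>\<theta>. phi_coeff (\<lambda>j. \<gamma> (- j)) (- k) \<theta> * A (\<lambda>j. \<gamma> (- j)) (- n) \<theta> / (2 * of_real pi))
          has_integral (if - k = - n then 1 else 0)) {0..2*pi}"
    using nonneg small finite_Collect_uminus[OF fin] by (intro phi_coeff_A_biorthogonal) auto
  then show "((\<lambda>\<theta>. phi_star_coeff \<gamma> k \<theta> * A_star \<gamma> n \<theta> / (2 * of_real pi))
          has_integral (if k = n then 1 else 0)) {0..2*pi}"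
    by (simp add: phi_star_coeff_eq_phi_coeff_reflect A_star_eq_A_reflect)
qed

end
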